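(* Let $X$ be an infinite dimensional separable Banach space, let $T$ be a bounded linear operator on $X$ and let $\varepsilon\in(0,1)$. Let $\mathcal{D}_1$ be a dense subset of $X$. Let $\mathcal{D}_2$ be a subset of $X$ such that $\mathcal{D}_2\cap B(x,\varepsilon\|x\|)\neq\emptyset$ for all $x\in X\setminus\{0\}$. Let $(n(k))_k\subset\mathbb{N}$ be an increasing sequence and let $S_{n(k)}:\mathcal{D}_2\to X$ be maps such that: (1) $\lim_{k\to\infty}\|T^{n(k)}x\|=0$ for all $x\in\mathcal{D}_1$; (2) $\lim_{k\to\infty}\|S_{n(k)}y\|=0$ for all $y\in\mathcal{D}_2$; (3) $\lim_{k\to\infty}\|T^{n(k)}S_{n(k)}y-y\|=0$ for all $y\in\mathcal{D}_2$. Then $T$ satisfies the Hypercyclicity Criterion.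
   Context: $B(x,r)$ is the closed ball of center $x$ and radius $r$. $T$ satisfies the Hypercyclicity Criterion if there exist a sequence of integers $(m(k))_k$, two dense sets $\mathcal{E}_1,\mathcal{E}_2\subset X$ and maps $U_{m(k)}:\mathcal{E}_2\to X$ such that $T^{m(k)}x\to0$ for all $x\in\mathcal{E}_1$, $U_{m(k)}y\to0$ and $T^{m(k)}U_{m(k)}y\to y$ for all $y\in\mathcal{E}_2$. *)

theory Defs
  imports "HOL-Analysis.Analysis"
begin

definition infinite_dimensional :: "'a::real_vector itself \<Rightarrow> bool" where
  "infinite_dimensional _ \<longleftrightarrow> \<not> (\<exists>B::'a set. finite B \<and> span B = UNIV)"

definition satisfies_HC :: "('a::real_normed_vector \<Rightarrow> 'a) \<Rightarrow> bool" where
  "satisfies_HC T \<longleftrightarrow>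
     (\<exists>(m::nat \<Rightarrow> nat) (E1::'a set) (E2::'a set) (U::nat \<Rightarrow> 'a \<Rightarrow> 'a).
        closure E1 = UNIV \<and> closure E2 = UNIV \<and>
        (\<forall>x\<in>E1. (\<lambda>k. (T ^^ m k) x) \<longlonglongrightarrow> 0) \<and>
        (\<forall>y\<in>E2. (\<lambda>k. U (m k) y) \<longlonglongrightarrow> 0) \<and>
        (\<forall>y\<in>E2. (\<lambda>k. (T ^^ m k) (U (m k) y)) \<longlonglongrightarrow> y))"

end

theory Submission
  imports Defs
begin

text \<open>Finite sums of elements of \<open>D\<^sub>2\<close> are dense: approximate \<open>x\<close> by some \<open>d \<in> D\<^sub>2\<close>
  within \<open>\<epsilon> \<parallel>x\<parallel>\<close>, then the remainder \<open>x - d\<close> in the same way, and so on; after \<open>N\<close> steps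
  the error is at most \<open>\<epsilon>\<^sup>N \<parallel>x\<parallel>\<close>. On such a finite sum \<open>y = d\<^sub>1 + \<dots> + d\<^sub>r\<close> put
  \<open>U\<^sub>n y = S\<^sub>n d\<^sub>1 + \<dots> + S\<^sub>n d\<^sub>r\<close>; by linearity of \<open>T\<^sup>n\<close> the hypotheses on \<open>D\<^sub>2\<close> pass to these
  sums, which gives the Hypercyclicity Criterion with \<open>E\<^sub>1 = D\<^sub>1\<close>.\<close>

lemma satisfies_HCI:
  assumes "closure E = UNIV" "closure F = UNIV"
    and "\<And>x. x \<in> E \<Longrightarrow> (\<lambda>k. (T ^^ m k) x) \<longlonglongrightarrow> 0"
    and "\<And>y. y \<in> F \<Longrightarrow> (\<lambda>k. U (m k) y) \<longlonglongrightarrow> 0"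
    and "\<And>y. y \<in> F \<Longrightarrow> (\<lambda>k. (T ^^ m k) (U (m k) y)) \<longlonglongrightarrow> y"
  shows "satisfies_HC T"
  unfolding satisfies_HC_def
  by (intro exI[of _ m] exI[of _ E] exI[of _ F] exI[of _ U] conjI ballI) (use assms in auto)

lemma linear_funpow:
  fixes f :: "'a::real_vector \<Rightarrow> 'a"
  assumes "linear f"
  shows "linear (f ^^ n)"
proof (induction n)
  case 0
  show ?case unfolding funpow.simps(1) by (rule linear_id)
next
  case (Suc n)
  show ?case unfolding funpow.simps(2) using Suc assms by (rule linear_compose)
qed

lemma linear_sum_list: "linear f \<Longrightarrow> f (sum_list xs) = sum_list (map f xs)"
  by (induction xs) (simp_all add: linear_add linear_0)

lemma tendsto_sum_list:
  fixes f :: "'i \<Rightarrow> 'b \<Rightarrow> 'a::topological_monoid_add"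
  assumes "\<And>x. x \<in> set xs \<Longrightarrow> ((\<lambda>k. f k x) \<longlongrightarrow> g x) F"
  shows "((\<lambda>k. sum_list (map (f k) xs)) \<longlongrightarrow> sum_list (map g xs)) F"
  using assms by (induction xs) (auto intro: tendsto_add)

definition finite_sums :: "'a::monoid_add set \<Rightarrow> 'a set" where
  "finite_sums D = {sum_list ds | ds. set ds \<subseteq> D}"

lemma zero_in_finite_sums: "0 \<in> finite_sums D"
  unfolding finite_sums_def by (intro CollectI exI[of _ "[]"]) simp

lemma add_in_finite_sums:
  assumes "d \<in> D" and "s \<in> finite_sums D"
  shows "d + s \<in> finite_sums D"
proof -
  obtain ds where "set ds \<subseteq> D" "s = sum_list ds"
    using assms(2) unfolding finite_sums_def by blast
  with assms(1) show ?thesis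
    unfolding finite_sums_def by (intro CollectI exI[of _ "d # ds"]) simp
qed

lemma finite_sums_approx:
  fixes D :: "'a::real_normed_vector set"
  assumes "0 \<le> \<epsilon>" and "\<forall>x. x \<noteq> 0 \<longrightarrow> D \<inter> cball x (\<epsilon> * norm x) \<noteq> {}"
  shows "\<exists>s\<in>finite_sums D. norm (y - s) \<le> \<epsilon> ^ N * norm y"
proof (induction N arbitrary: y)
  case 0
  show ?case using zero_in_finite_sums by force
next
  case (Suc N)
  show ?case
  proof (cases "y = 0")
    case True
    then show ?thesis using zero_in_finite_sums by force
  next
    case False
    then obtain d where d: "d \<in> D" "norm (y - d) \<le> \<epsilon> * norm y"
      using assms(2) by (force simp: dist_norm)
    obtain s where s: "s \<in> finite_sums D" "norm (y - d - s) \<le> \<epsilon> ^ N * norm (y - d)"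
      using Suc.IH by blast
    have "d + s \<in> finite_sums D"
      using d(1) s(1) by (rule add_in_finite_sums)
    moreover have "norm (y - (d + s)) \<le> \<epsilon> ^ Suc N * norm y"
    proof -
      have "norm (y - (d + s)) \<le> \<epsilon> ^ N * norm (y - d)"
        using s(2) by (simp add: algebra_simps)
      also have "\<dots> \<le> \<epsilon> ^ N * (\<epsilon> * norm y)"
        using d(2) assms(1) by (simp add: mult_left_mono)
      also have "\<dots> = \<epsilon> ^ Suc N * norm y"
        by (simp add: mult.assoc)
      finally show ?thesis .
    qed
    ultimately show ?thesis by blast
  qed
qed

lemma dense_finite_sums:
  fixes D :: "'a::real_normed_vector set"
  assumes "0 \<le> \<epsilon>" "\<epsilon> < 1" and "\<forall>x. x \<noteq> 0 \<longrightarrow> D \<inter> cball x (\<epsilon> * norm x) \<noteq> {}"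
  shows "closure (finite_sums D) = UNIV"
proof -
  have "x \<in> closure (finite_sums D)" for x
  proof -
    obtain s where s: "\<And>N. s N \<in> finite_sums D" "\<And>N. norm (x - s N) \<le> \<epsilon> ^ N * norm x"
      using finite_sums_approx[OF assms(1,3)] by metis
    have "(\<lambda>N. \<epsilon> ^ N * norm x) \<longlonglongrightarrow> 0"
      using assms(1,2) by (intro tendsto_mult_left_zero[OF LIMSEQ_power_zero]) simp
    then have "(\<lambda>N. s N - x) \<longlonglongrightarrow> 0"
      by (rule Lim_null_comparison[OF always_eventually, rotated]) (simp add: s(2) norm_minus_commute)
    then have "s \<longlonglongrightarrow> x"
      by (rule LIM_zero_cancel)
    with s(1) show ?thesis
      unfolding closure_sequential by blast
  qed
  then show ?thesis by blast
qed

lemma satisfies_HC_finite_sums: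
  fixes T :: "'a::real_normed_vector \<Rightarrow> 'a"
  assumes "linear T"
    and "closure E = UNIV" "closure (finite_sums D) = UNIV"
    and "\<forall>x\<in>E. (\<lambda>k. (T ^^ m k) x) \<longlonglongrightarrow> 0"
    and S_to_0: "\<forall>y\<in>D. (\<lambda>k. S (m k) y) \<longlonglongrightarrow> 0"
    and TS_to_id: "\<forall>y\<in>D. (\<lambda>k. (T ^^ m k) (S (m k) y)) \<longlonglongrightarrow> y"
  shows "satisfies_HC T"
proof -
  define summands where "summands y = (SOME ds. set ds \<subseteq> D \<and> sum_list ds = y)" for y
  define U where "U j y = sum_list (map (S j) (summands y))" for j y
  have summands: "set (summands y) \<subseteq> D" "sum_list (summands y) = y" if "y \<in> finite_sums D" for y
    using someI_ex[of "\<lambda>ds. set ds \<subseteq> D \<and> sum_list ds = y"] that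
    unfolding summands_def finite_sums_def by auto
  have U_to_0: "(\<lambda>k. U (m k) y) \<longlonglongrightarrow> 0" if "y \<in> finite_sums D" for y
    using tendsto_sum_list[of "summands y" "\<lambda>k. S (m k)" "\<lambda>_. 0"] summands(1)[OF that] S_to_0
    unfolding U_def by auto
  have TU_to_id: "(\<lambda>k. (T ^^ m k) (U (m k) y)) \<longlonglongrightarrow> y" if "y \<in> finite_sums D" for y
  proof -
    have "(\<lambda>k. (T ^^ m k) (U (m k) y)) = (\<lambda>k. sum_list (map (\<lambda>d. (T ^^ m k) (S (m k) d)) (summands y)))"
      unfolding U_def linear_sum_list[OF linear_funpow[OF assms(1)]] map_map o_def ..
    moreover have "\<dots> \<longlonglongrightarrow> sum_list (summands y)"
      using summands(1)[OF that] TS_to_id by (intro tendsto_sum_list[where g = "\<lambda>d. d", unfolded map_ident]) auto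
    ultimately show ?thesis
      by (simp only: summands(2)[OF that])
  qed
  show ?thesis
    by (rule satisfies_HCI[where m = m and U = U, OF assms(2,3)])
      (use assms(4) U_to_0 TU_to_id in blast)+
qed

theorem proposition5p1:
  fixes T :: "'a::banach \<Rightarrow> 'a"
    and \<epsilon> :: real
    and D1 D2 :: "'a set"
    and n :: "nat \<Rightarrow> nat"
    and S :: "nat \<Rightarrow> 'a \<Rightarrow> 'a"
  assumes "infinite_dimensional TYPE('a)"
    and "separable_space (euclidean :: 'a topology)"
    and "bounded_linear T"
    and "0 < \<epsilon>" and "\<epsilon> < 1"
    and "closure D1 = UNIV"
    and "\<forall>x. x \<noteq> 0 \<longrightarrow> D2 \<inter> cball x (\<epsilon> * norm x) \<noteq> {}"
    and "strict_mono n"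
    and "\<forall>x\<in>D1. (\<lambda>k. norm ((T ^^ n k) x)) \<longlonglongrightarrow> 0"
    and "\<forall>y\<in>D2. (\<lambda>k. norm (S (n k) y)) \<longlonglongrightarrow> 0"
    and "\<forall>y\<in>D2. (\<lambda>k. norm ((T ^^ n k) (S (n k) y) - y)) \<longlonglongrightarrow> 0"
  shows "satisfies_HC T"
proof (rule satisfies_HC_finite_sums[where m = n and E = D1 and D = D2 and S = S])
  show "linear T"
    using assms(3) by (rule bounded_linear.linear)
  show "closure (finite_sums D2) = UNIV"
    using assms(4,5,7) by (intro dense_finite_sums) simp_all
  show "\<forall>x\<in>D1. (\<lambda>k. (T ^^ n k) x) \<longlonglongrightarrow> 0"
    using assms(9) by (simp add: tendsto_norm_zero_iff)
  show "\<forall>y\<in>D2. (\<lambda>k. S (n k) y) \<longlonglongrightarrow> 0"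
    using assms(10) by (simp add: tendsto_norm_zero_iff)
  show "\<forall>y\<in>D2. (\<lambda>k. (T ^^ n k) (S (n k) y)) \<longlonglongrightarrow> y"
    using assms(11) Lim_null tendsto_norm_zero_iff by blast
  show "closure D1 = UNIV"
    by (fact assms(6))
qed

end
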